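(* The transitivity degree of Thompson's group $F$ is at most $2$.
   Context: Thompson's group $F$ is the group of orientation-preserving homeomorphisms of $[0,1]$ that are piecewise linear with finitely many points of non-differentiability, all at dyadic rationals, and whose slopes are integer powers of $2$. The transitivity degree of a group is the supremum of all $k$ such that it admits a faithful action on a set that is transitive on ordered $k$-tuples of distinct elements. *)

theory Defs
  imports "HOL-Analysis.Analysis" "HOL-Algebra.Group_Action"
begin

definition dyadic :: "real \<Rightarrow> bool" where
  "dyadic x \<longleftrightarrow> (\<exists>(m::int) (n::nat). x = real_of_int m / 2 ^ n)"

text \<open>Elements of Thompson's group F, represented as functions on the reals that
  are the identity outside [0,1] (a canonical representative of a map of [0,1]).\<close>
definition thompsonF :: "(real \<Rightarrow> real) set" where
  "thompsonF = {f.
     homeomorphism {0..1} {0..1} f (inv_into {0..1} f)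
   \<and> mono_on {0..1} f
   \<and> (\<forall>x. x \<notin> {0..1} \<longrightarrow> f x = x)
   \<and> (\<exists>(a::nat \<Rightarrow> real) n. a 0 = 0 \<and> a n = 1
        \<and> (\<forall>i\<le>n. dyadic (a i))
        \<and> (\<forall>i<n. a i < a (Suc i))
        \<and> (\<forall>i<n. \<exists>(k::int) b. \<forall>x\<in>{a i..a (Suc i)}. f x = (2::real) powi k * x + b))}"

definition thompsonF_group :: "(real \<Rightarrow> real) monoid" where
  "thompsonF_group = \<lparr>carrier = thompsonF, mult = (\<circ>), one = id\<rparr>"

definition k_transitive :: "('a, 'm) monoid_scheme \<Rightarrow> 'b set \<Rightarrow> ('a \<Rightarrow> 'b \<Rightarrow> 'b) \<Rightarrow> nat \<Rightarrow> bool" where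
  "k_transitive G E \<phi> k \<longleftrightarrow>
     (\<forall>x y :: nat \<Rightarrow> 'b.
        inj_on x {..<k} \<and> x ` {..<k} \<subseteq> E \<and> inj_on y {..<k} \<and> y ` {..<k} \<subseteq> E
        \<longrightarrow> (\<exists>g\<in>carrier G. \<forall>i<k. \<phi> g (x i) = y i))"

end

theory Submission
  imports Defs
begin

text \<open>Suppose the action is faithful and k-transitive with k \<ge> 3. Since F is infinite, so is
  the set acted on (k-transitivity is vacuous on fewer than k points), and the action is
  3-transitive. A subgroup S that acts nontrivially and satisfies \<open>gSg\<inverse> \<subseteq> S\<close> or
  \<open>g\<inverse>Sg \<subseteq> S\<close> for every g is then transitive: if z is not in the orbit of x under S,
  pick h in S moving x to y, and conjugate h by an element fixing x and swapping y and z.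
  The pointwise stabilisers in F of the rays [c, \<infinity>) and (-\<infinity>, c] have this property,
  because every element of F, or its inverse, maps the ray into itself. So the stabiliser A
  of [1/2, \<infinity>) is transitive. The stabiliser K of (-\<infinity>, 1/2] commutes with A, hence acts
  freely, and a freely acting subgroup equals each of its transitive subgroups, such as the
  stabiliser of (-\<infinity>, 3/4]. But a bump supported in [1/2, 3/4] lies in K and not in the
  latter.\<close>

definition acts_transitively :: "'a set \<Rightarrow> 'b set \<Rightarrow> ('a \<Rightarrow> 'b \<Rightarrow> 'b) \<Rightarrow> bool" where
  "acts_transitively S E \<phi> \<longleftrightarrow> (\<forall>u\<in>E. \<forall>v\<in>E. \<exists>h\<in>S. \<phi> h u = v)"

lemma (in faithful_action) eq_one_if_fixes_all:
  assumes g: "g \<in> carrier G" and fixes_all: "\<forall>x\<in>E. \<phi> g x = x"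
  shows "g = \<one>"
proof -
  interpret group G using group_hom group_hom.axioms(1) by blast
  have "\<phi> g \<in> extensional E" using bij_prop0[OF g] by (simp add: Bij_def)
  then have "\<phi> g = (\<lambda>x\<in>E. x)" using fixes_all by (intro extensionalityI) auto
  then have "\<phi> g = \<phi> \<one>" by (simp add: id_eq_one)
  then show ?thesis using faithful g by (simp add: inj_on_eq_iff)
qed

lemma (in faithful_action) infinite_if_infinite_carrier:
  assumes "infinite (carrier G)"
  shows "infinite E"
proof
  assume "finite E"
  have "\<phi> ` carrier G \<subseteq> E \<rightarrow>\<^sub>E E"
    using bij_prop0 by (force simp: Bij_def bij_betw_def PiE_iff)
  moreover have "finite (E \<rightarrow>\<^sub>E E)"
    using \<open>finite E\<close> by (simp add: finite_PiE)
  ultimately have "finite (\<phi> ` carrier G)"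
    by (rule finite_subset)
  then show False using finite_imageD[OF _ faithful] assms by blast
qed

lemma k_transitive_le:
  assumes k: "k_transitive G E \<phi> k" and "j \<le> k" and "infinite E"
  shows "k_transitive G E \<phi> j"
  unfolding k_transitive_def
proof (intro allI impI)
  fix x y :: "nat \<Rightarrow> _"
  assume xy: "inj_on x {..<j} \<and> x ` {..<j} \<subseteq> E \<and> inj_on y {..<j} \<and> y ` {..<j} \<subseteq> E"
  have "infinite (E - (x ` {..<j} \<union> y ` {..<j}))" using \<open>infinite E\<close> by simp
  then obtain e :: "nat \<Rightarrow> _" where e: "inj e" "range e \<subseteq> E - (x ` {..<j} \<union> y ` {..<j})"
    using infinite_countable_subset by blast
  have e_in: "e i \<in> E" for i
    using e by auto
  have e_new: "x l \<noteq> e i" "e i \<noteq> x l" "y l \<noteq> e i" "e i \<noteq> y l" if "l < j" for i l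
    using e that by auto
  define x' where "x' i = (if i < j then x i else e i)" for i
  define y' where "y' i = (if i < j then y i else e i)" for i
  have "inj_on x' {..<k} \<and> x' ` {..<k} \<subseteq> E \<and> inj_on y' {..<k} \<and> y' ` {..<k} \<subseteq> E"
    using xy e(1) e_in e_new unfolding x'_def y'_def inj_on_def by (auto simp: image_subset_iff)
  then obtain g where g: "g \<in> carrier G" and g_maps: "\<forall>i<k. \<phi> g (x' i) = y' i"
    using k[unfolded k_transitive_def, rule_format, of x' y'] by blast
  have "\<phi> g (x i) = y i" if "i < j" for i
    using g_maps[rule_format, of i] that \<open>j \<le> k\<close> by (simp add: x'_def y'_def)
  with g show "\<exists>g\<in>carrier G. \<forall>i<j. \<phi> g (x i) = y i" by blast
qed

lemma k_transitive_3_swap: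
  assumes "k_transitive G E \<phi> 3" and "x \<in> E" "y \<in> E" "z \<in> E" "distinct [x, y, z]"
  shows "\<exists>g\<in>carrier G. \<phi> g x = x \<and> \<phi> g y = z \<and> \<phi> g z = y"
proof -
  have three: "{..<3::nat} = {0, 1, 2}" by auto
  have "inj_on ((!) [x, y, z]) {..<3} \<and> (!) [x, y, z] ` {..<3} \<subseteq> E
      \<and> inj_on ((!) [x, z, y]) {..<3} \<and> (!) [x, z, y] ` {..<3} \<subseteq> E"
    using assms(2-) unfolding three by (auto simp: inj_on_def)
  then obtain g where g: "g \<in> carrier G" and "\<forall>i<3. \<phi> g ([x, y, z] ! i) = [x, z, y] ! i"
    using assms(1)[unfolded k_transitive_def, rule_format, of "(!) [x, y, z]" "(!) [x, z, y]"]
    by blast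
  then have "\<phi> g x = x \<and> \<phi> g y = z \<and> \<phi> g z = y"
    by (auto dest: spec[of _ 0] spec[of _ 1] spec[of _ 2])
  with g show ?thesis by blast
qed

lemma (in group_action) acts_transitively_if_orbit_is_all:
  assumes S: "subgroup S G" and "x \<in> E" and orbit: "\<forall>z\<in>E. \<exists>h\<in>S. \<phi> h x = z"
  shows "acts_transitively S E \<phi>"
  unfolding acts_transitively_def
proof (intro ballI)
  interpret group G using group_hom group_hom.axioms(1) by blast
  fix u v assume "u \<in> E" "v \<in> E"
  then obtain h1 h2 where h: "h1 \<in> S" "h2 \<in> S" and "\<phi> h1 x = u" "\<phi> h2 x = v"
    using orbit by blast
  moreover have h_carrier: "h1 \<in> carrier G" "h2 \<in> carrier G"
    using h subgroup.subset[OF S] by auto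
  ultimately have "\<phi> (h2 \<otimes> inv h1) u = v"
    using \<open>x \<in> E\<close> \<open>u \<in> E\<close> composition_rule orbit_sym_aux by simp
  moreover have "h2 \<otimes> inv h1 \<in> S"
    using h S by (simp add: subgroup.m_closed subgroup.m_inv_closed)
  ultimately show "\<exists>h\<in>S. \<phi> h u = v" by blast
qed

lemma (in group_action) acts_transitively_if_conjugates_comparable:
  assumes S: "subgroup S G"
    and comparable: "\<forall>g\<in>carrier G. (\<forall>h\<in>S. g \<otimes> h \<otimes> inv g \<in> S) \<or> (\<forall>h\<in>S. inv g \<otimes> h \<otimes> g \<in> S)"
    and three: "k_transitive G E \<phi> 3"
    and h: "h \<in> S" and x: "x \<in> E" "\<phi> h x \<noteq> x"
  shows "acts_transitively S E \<phi>"
proof (rule acts_transitively_if_orbit_is_all[OF S x(1)], rule ballI, rule ccontr)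
  interpret group G using group_hom group_hom.axioms(1) by blast
  fix z assume "z \<in> E" and unreached: "\<not> (\<exists>h\<in>S. \<phi> h x = z)"
  define y where "y = \<phi> h x"
  have h_carrier: "h \<in> carrier G" using h subgroup.subset[OF S] by blast
  have "y \<in> E" using element_image[OF h_carrier x(1)] y_def by simp
  moreover have "z \<noteq> x" using unreached S x(1) id_eq_one[symmetric] subgroup.one_closed by fastforce
  moreover have "z \<noteq> y" using unreached h y_def by blast
  ultimately obtain g where g: "g \<in> carrier G" "\<phi> g x = x" "\<phi> g y = z" "\<phi> g z = y"
    using k_transitive_3_swap[OF three x(1)] \<open>z \<in> E\<close> x(2) y_def by force
  have "\<phi> (inv g) x = x" "\<phi> (inv g) y = z"
    using g x(1) \<open>z \<in> E\<close> orbit_sym_aux by auto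
  then have "\<phi> (g \<otimes> h \<otimes> inv g) x = z" "\<phi> (inv g \<otimes> h \<otimes> g) x = z"
    using g h_carrier x(1) composition_rule y_def by simp_all
  then show False using comparable g(1) h unreached by blast
qed

lemma (in faithful_action) eq_one_if_centralizes_transitive:
  assumes A: "acts_transitively A E \<phi>" "A \<subseteq> carrier G"
    and b: "b \<in> carrier G" "\<forall>a\<in>A. a \<otimes> b = b \<otimes> a"
    and x: "x \<in> E" "\<phi> b x = x"
  shows "b = \<one>"
proof (rule eq_one_if_fixes_all[OF b(1)], rule ballI)
  fix y assume "y \<in> E"
  then obtain a where a: "a \<in> A" "\<phi> a x = y"
    using A(1) x(1) unfolding acts_transitively_def by blast
  then have "\<phi> b y = \<phi> (b \<otimes> a) x"
    using A(2) b(1) x(1) composition_rule by auto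
  also have "\<dots> = \<phi> (a \<otimes> b) x" using a(1) b(2) by simp
  also have "\<dots> = y" using a A(2) b(1) x composition_rule by auto
  finally show "\<phi> b y = y" .
qed

lemma (in group_action) subgroup_subset_if_semiregular:
  assumes K: "subgroup K G" and semiregular: "\<forall>k\<in>K. \<forall>x\<in>E. \<phi> k x = x \<longrightarrow> k = \<one>"
    and H: "H \<subseteq> K" "acts_transitively H E \<phi>" and "x \<in> E"
  shows "K \<subseteq> H"
proof
  interpret group G using group_hom group_hom.axioms(1) by blast
  fix k assume k: "k \<in> K"
  then have k_carrier: "k \<in> carrier G" using subgroup.subset[OF K] by blast
  have "\<phi> k x \<in> E" using element_image[OF k_carrier \<open>x \<in> E\<close>] by simp
  then obtain h where h: "h \<in> H" "\<phi> h x = \<phi> k x"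
    using H(2) \<open>x \<in> E\<close> unfolding acts_transitively_def by blast
  then have h_carrier: "h \<in> carrier G" using H(1) subgroup.subset[OF K] by blast
  have "\<phi> (inv h \<otimes> k) x = x"
    using h k_carrier h_carrier \<open>x \<in> E\<close> composition_rule orbit_sym_aux by simp
  moreover have "inv h \<otimes> k \<in> K"
    using h H(1) k K by (auto simp: subgroup.m_closed subgroup.m_inv_closed)
  ultimately have "inv h \<otimes> k = \<one>" using semiregular \<open>x \<in> E\<close> by blast
  then have "k = h" using k_carrier h_carrier by (metis inv_equality l_inv_ex inv_inv)
  with h show "k \<in> H" by simp
qed

lemma dyadic_add: "dyadic x \<Longrightarrow> dyadic y \<Longrightarrow> dyadic (x + y)"
proof -
  assume "dyadic x" "dyadic y"
  then obtain m n m' n' where x: "x = real_of_int m / 2^n" and y: "y = real_of_int m' / 2^n'"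
    unfolding dyadic_def by blast
  have "x + y = real_of_int (m * 2^n' + m' * 2^n) / 2^(n + n')"
    unfolding x y by (simp add: field_simps power_add)
  then show ?thesis unfolding dyadic_def by blast
qed

lemma dyadic_add_of_nat_mult: "dyadic p \<Longrightarrow> dyadic d \<Longrightarrow> dyadic (p + of_nat n * d)"
proof (induction n)
  case (Suc n)
  then show ?case using dyadic_add[of "p + of_nat n * d" d] by (simp add: algebra_simps)
qed simp

lemma dyadic_int_divide_power: "dyadic (real_of_int m / 2 ^ n)"
  unfolding dyadic_def by blast

lemma thompsonF_intro:
  fixes f :: "real \<Rightarrow> real"
  assumes cont: "continuous_on {0..1} f" and strict: "strict_mono_on {0..1} f"
    and ends: "f 0 = 0" "f 1 = 1" and outside: "\<forall>x. x \<notin> {0..1} \<longrightarrow> f x = x"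
    and breakpoints: "a 0 = 0" "a n = 1" "\<forall>i\<le>n. dyadic (a i)" "\<forall>i<n. a i < a (Suc i)"
    and affine: "\<forall>i<n. \<exists>(k::int) b. \<forall>x\<in>{a i..a (Suc i)}. f x = 2 powi k * x + b"
  shows "f \<in> thompsonF"
proof -
  have inj: "inj_on f {0..1}" and mono: "mono_on {0..1} f"
    using strict strict_mono_on_imp_inj_on strict_mono_on_imp_mono_on by auto
  have "f ` {0..1} = {0..1}"
  proof
    show "f ` {0..1} \<subseteq> {0..1}"
      using mono_onD[OF mono, of 0] mono_onD[OF mono, of _ 1] ends by fastforce
    show "{0..1} \<subseteq> f ` {0..1}"
      using IVT'[of f 0 _ 1] cont ends by fastforce
  qed
  then obtain g where g: "homeomorphism {0..1} {0..1} f g"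
    using homeomorphism_compact[OF compact_Icc cont _ inj] by blast
  have "homeomorphism {0..1} {0..1} f (inv_into {0..1} f)"
  proof (rule homeomorphism_cong[OF g])
    fix y :: real assume "y \<in> {0..1}"
    then show "inv_into {0..1} f y = g y"
      using g inv_into_f_eq[OF inj] unfolding homeomorphism_def by blast
  qed auto
  then show ?thesis
    unfolding thompsonF_def using mono outside breakpoints affine by blast
qed

text \<open>The bump is the identity outside [p, p + 4d] and has slopes 1/2, 1, 2 on
  [p, p + 2d], [p + 2d, p + 3d], [p + 3d, p + 4d]; it moves p + 2d to p + d.\<close>
definition bump :: "real \<Rightarrow> real \<Rightarrow> real \<Rightarrow> real" where
  "bump p d x = max (max (min x ((x + p) / 2)) (x - d)) (min (2 * x - p - 4 * d) x)"

lemma strict_mono_bump: "d > 0 \<Longrightarrow> strict_mono (bump p d)"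
  unfolding bump_def strict_mono_def by (auto simp: max_def min_def)

lemma bump_eq_self: "d > 0 \<Longrightarrow> x \<le> p \<or> p + 4 * d \<le> x \<Longrightarrow> bump p d x = x"
  unfolding bump_def by (auto simp: max_def min_def)

lemma bump_middle: "d > 0 \<Longrightarrow> bump p d (p + 2 * d) = p + d"
  unfolding bump_def by (auto simp: max_def min_def)

lemma bump_affine_pieces:
  assumes "d > 0"
  shows "x \<in> {p..p + 2 * d} \<Longrightarrow> bump p d x = (x + p) / 2"
    and "x \<in> {p + 2 * d..p + 3 * d} \<Longrightarrow> bump p d x = x - d"
    and "x \<in> {p + 3 * d..p + 4 * d} \<Longrightarrow> bump p d x = 2 * x - p - 4 * d"
  using assms unfolding bump_def by (auto simp: max_def min_def)

lemma bump_in_thompsonF: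
  assumes d: "d > 0" and "p > 0" "p + 4 * d < 1" "dyadic p" "dyadic d"
  shows "bump p d \<in> thompsonF"
proof (rule thompsonF_intro)
  define a where "a = (!) [0, p, p + 2 * d, p + 3 * d, p + 4 * d, 1]"
  show "a 0 = 0" "a 5 = 1"
    by (simp_all add: a_def numeral_eq_Suc)
  have "dyadic (p + 2 * d)" "dyadic (p + 3 * d)" "dyadic (p + 4 * d)"
    using dyadic_add_of_nat_mult[OF assms(4,5), of 2] dyadic_add_of_nat_mult[OF assms(4,5), of 3]
      dyadic_add_of_nat_mult[OF assms(4,5), of 4] by simp_all
  moreover have "dyadic 0" "dyadic 1"
    using dyadic_int_divide_power[of 0 0] dyadic_int_divide_power[of 1 0] by simp_all
  ultimately have "\<forall>i<6. dyadic (a i)"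
    using assms(4) by (simp add: a_def numeral_eq_Suc All_less_Suc)
  then show "\<forall>i\<le>5. dyadic (a i)"
    by (simp add: less_Suc_eq_le[symmetric] del: less_Suc_eq_le)
  show "\<forall>i<5. a i < a (Suc i)"
    using assms by (simp add: a_def numeral_eq_Suc All_less_Suc)
  have "\<exists>(k::int) b. \<forall>x\<in>{0..p}. bump p d x = 2 powi k * x + b"
    "\<exists>(k::int) b. \<forall>x\<in>{p + 4 * d..1}. bump p d x = 2 powi k * x + b"
    using bump_eq_self[OF d] by (auto intro!: exI[of _ 0])
  moreover have "\<exists>(k::int) b. \<forall>x\<in>{p..p + 2 * d}. bump p d x = 2 powi k * x + b"
    using bump_affine_pieces(1)[OF d]
    by (intro exI[of _ "-1"] exI[of _ "p / 2"]) (simp add: power_int_minus field_simps)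
  moreover have "\<exists>(k::int) b. \<forall>x\<in>{p + 2 * d..p + 3 * d}. bump p d x = 2 powi k * x + b"
    using bump_affine_pieces(2)[OF d] by (intro exI[of _ 0] exI[of _ "-d"]) simp
  moreover have "\<exists>(k::int) b. \<forall>x\<in>{p + 3 * d..p + 4 * d}. bump p d x = 2 powi k * x + b"
    using bump_affine_pieces(3)[OF d] by (intro exI[of _ 1] exI[of _ "-p - 4 * d"]) simp
  ultimately show "\<forall>i<5. \<exists>(k::int) b. \<forall>x\<in>{a i..a (Suc i)}. bump p d x = 2 powi k * x + b"
    by (simp add: a_def numeral_eq_Suc All_less_Suc)
  show "continuous_on {0..1} (bump p d)"
    unfolding bump_def by (intro continuous_intros) simp
  show "strict_mono_on {0..1} (bump p d)"
    using strict_mono_bump[OF d] by (rule monotone_on_subset) simp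
qed (use assms bump_eq_self in auto)

lemma thompsonF_group_simps [simp]:
  "carrier thompsonF_group = thompsonF" "mult thompsonF_group = (\<circ>)" "one thompsonF_group = id"
  by (simp_all add: thompsonF_group_def)

lemma mono_thompsonF:
  assumes "f \<in> thompsonF"
  shows "mono f"
proof
  fix x y :: real assume "x \<le> y"
  have mono: "mono_on {0..1} f" and maps: "\<And>x. x \<in> {0..1} \<Longrightarrow> f x \<in> {0..1}"
    and outside: "\<And>x. x \<notin> {0..1} \<Longrightarrow> f x = x"
    using assms unfolding thompsonF_def homeomorphism_def by blast+
  consider "x \<in> {0..1}" "y \<in> {0..1}" | "x < 0" | "1 < y"
    using \<open>x \<le> y\<close> by fastforce
  then show "f x \<le> f y"
  proof cases
    case 1
    then show ?thesis using mono_onD[OF mono] \<open>x \<le> y\<close> by blast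
  next
    case 2
    then show ?thesis using maps[of y] outside[of x] outside[of y] \<open>x \<le> y\<close> by fastforce
  next
    case 3
    then show ?thesis using maps[of x] outside[of x] outside[of y] \<open>x \<le> y\<close> by fastforce
  qed
qed

lemma infinite_thompsonF: "infinite thompsonF"
proof -
  define d where "d n = ((1::real) / 2) ^ (n + 3)" for n
  define f where "f n = bump (1/4) (d n)" for n
  have d_pos: "d n > 0" for n
    unfolding d_def by simp
  have "f n \<in> thompsonF" for n
  proof -
    have "d n \<le> 1/8"
      using power_decreasing[of 3 "n + 3" "1/2 :: real"] by (simp add: d_def power_one_over)
    moreover have "dyadic (1/4)" "dyadic (d n)"
      using dyadic_int_divide_power[of 1 2] dyadic_int_divide_power[of 1 "n + 3"]
      by (simp_all add: d_def power_one_over)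
    ultimately show ?thesis
      unfolding f_def using d_pos by (intro bump_in_thompsonF) simp_all
  qed
  moreover have "inj f"
  proof (rule linorder_injI)
    fix m n :: nat assume "m < n"
    then have "4 * d n \<le> 2 * d m"
      using power_decreasing[of "m + 2" "n + 1" "1/2 :: real"] by (simp add: d_def power_add power_one_over)
    then have "f n (1/4 + 2 * d m) = 1/4 + 2 * d m"
      unfolding f_def using d_pos by (intro bump_eq_self) simp_all
    moreover have "f m (1/4 + 2 * d m) = 1/4 + d m"
      unfolding f_def using d_pos by (intro bump_middle)
    ultimately show "f m \<noteq> f n" using d_pos[of m] by auto
  qed
  ultimately show ?thesis
    using infinite_super range_inj_infinite by (metis image_subset_iff)
qed

definition thompsonF_fixing :: "real set \<Rightarrow> (real \<Rightarrow> real) set" where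
  "thompsonF_fixing S = {f \<in> thompsonF. \<forall>x\<in>S. f x = x}"

lemma thompsonF_fixing_antimono: "S \<subseteq> T \<Longrightarrow> thompsonF_fixing T \<subseteq> thompsonF_fixing S"
  unfolding thompsonF_fixing_def by blast

lemma bump_in_thompsonF_fixing:
  assumes "d > 0" "p > 0" "p + 4 * d < 1" "dyadic p" "dyadic d" "S \<subseteq> {..p} \<union> {p + 4 * d..}"
  shows "bump p d \<in> thompsonF_fixing S"
proof -
  have "bump p d x = x" if "x \<in> S" for x
    using assms(6) that bump_eq_self[OF assms(1)] by auto
  then show ?thesis
    unfolding thompsonF_fixing_def using bump_in_thompsonF[OF assms(1-5)] by blast
qed

lemma bump_ne_id: "d > 0 \<Longrightarrow> bump p d \<noteq> id"
proof
  assume "d > 0" "bump p d = id"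
  then have "p + d = p + 2 * d" using bump_middle[of d p] by simp
  then show False using \<open>d > 0\<close> by simp
qed

lemma thompsonF_fixing_commute:
  assumes l: "l \<in> thompsonF_fixing {c..}" and m: "m \<in> thompsonF_fixing {..c}"
  shows "l \<circ> m = m \<circ> l"
proof
  fix x
  have "mono l" "mono m" and fix_l: "\<And>x. c \<le> x \<Longrightarrow> l x = x" and fix_m: "\<And>x. x \<le> c \<Longrightarrow> m x = x"
    using l m mono_thompsonF unfolding thompsonF_fixing_def by auto
  show "(l \<circ> m) x = (m \<circ> l) x"
  proof (cases "x \<le> c")
    case True
    then have "l x \<le> c" using monoD[OF \<open>mono l\<close> True] fix_l[of c] by simp
    then show ?thesis using True fix_m by simp
  next
    case False
    then have "c \<le> m x" using monoD[OF \<open>mono m\<close>, of c x] fix_m[of c] by simp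
    then show ?thesis using False fix_l by simp
  qed
qed

lemma mono_image_atLeast_or_inverse:
  fixes g g' :: "'a::linorder \<Rightarrow> 'a"
  assumes "mono g" and inverse: "\<And>x. g (g' x) = x"
  shows "g ` {c..} \<subseteq> {c..} \<or> g' ` {c..} \<subseteq> {c..}"
proof (cases "c \<le> g c")
  case True
  then show ?thesis using monoD[OF \<open>mono g\<close>] by (auto intro: order_trans)
next
  case False
  have "c \<le> g' x" if "c \<le> x" for x
  proof (rule ccontr)
    assume "\<not> c \<le> g' x"
    then have "x \<le> g c" using monoD[OF \<open>mono g\<close>, of "g' x" c] inverse by simp
    then show False using False \<open>c \<le> x\<close> by simp
  qed
  then show ?thesis by auto
qed

lemma mono_image_atMost_or_inverse:
  fixes g g' :: "'a::linorder \<Rightarrow> 'a"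
  assumes "mono g" and inverse: "\<And>x. g (g' x) = x"
  shows "g ` {..c} \<subseteq> {..c} \<or> g' ` {..c} \<subseteq> {..c}"
proof (cases "g c \<le> c")
  case True
  then show ?thesis using monoD[OF \<open>mono g\<close>] by (auto intro: order_trans)
next
  case False
  have "g' x \<le> c" if "x \<le> c" for x
  proof (rule ccontr)
    assume "\<not> g' x \<le> c"
    then have "g c \<le> x" using monoD[OF \<open>mono g\<close>, of c "g' x"] inverse by simp
    then show False using False \<open>x \<le> c\<close> by simp
  qed
  then show ?thesis by auto
qed

text \<open>Closure of F under composition and inversion is not proved here: that
  \<^const>\<open>thompsonF_group\<close> is a group is part of the hypothesis that it acts on a set.\<close>

context
  assumes group: "group thompsonF_group"
begin

interpretation F: group thompsonF_group by (rule group)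

lemma thompsonF_inv:
  assumes "g \<in> thompsonF"
  shows "g ((inv\<^bsub>thompsonF_group\<^esub> g) x) = x" "(inv\<^bsub>thompsonF_group\<^esub> g) (g x) = x"
    and "inv\<^bsub>thompsonF_group\<^esub> g \<in> thompsonF"
proof -
  have "g \<circ> inv\<^bsub>thompsonF_group\<^esub> g = id" "inv\<^bsub>thompsonF_group\<^esub> g \<circ> g = id"
    using F.r_inv[of g] F.l_inv[of g] assms by simp_all
  then show "g ((inv\<^bsub>thompsonF_group\<^esub> g) x) = x" "(inv\<^bsub>thompsonF_group\<^esub> g) (g x) = x"
    by (metis comp_apply id_apply)+
  show "inv\<^bsub>thompsonF_group\<^esub> g \<in> thompsonF"
    using F.inv_closed[of g] assms by simp
qed

lemma subgroup_thompsonF_fixing: "subgroup (thompsonF_fixing S) thompsonF_group"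
proof (rule F.subgroupI)
  show "thompsonF_fixing S \<subseteq> carrier thompsonF_group" "thompsonF_fixing S \<noteq> {}"
    using F.one_closed by (auto simp: thompsonF_fixing_def)
  fix g h assume g: "g \<in> thompsonF_fixing S" and h: "h \<in> thompsonF_fixing S"
  then have "g \<in> thompsonF" "\<forall>x\<in>S. g x = x" unfolding thompsonF_fixing_def by auto
  then have "\<forall>x\<in>S. (inv\<^bsub>thompsonF_group\<^esub> g) x = x"
    using thompsonF_inv(2)[of g] by metis
  then show "inv\<^bsub>thompsonF_group\<^esub> g \<in> thompsonF_fixing S"
    using thompsonF_inv(3)[OF \<open>g \<in> thompsonF\<close>] unfolding thompsonF_fixing_def by blast
  show "g \<otimes>\<^bsub>thompsonF_group\<^esub> h \<in> thompsonF_fixing S"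
    using g h F.m_closed[of g h] unfolding thompsonF_fixing_def by simp
qed

lemma conjugate_in_thompsonF_fixing:
  assumes g: "g \<in> thompsonF" "g ` S \<subseteq> S" and h: "h \<in> thompsonF_fixing S"
  shows "inv\<^bsub>thompsonF_group\<^esub> g \<otimes>\<^bsub>thompsonF_group\<^esub> h \<otimes>\<^bsub>thompsonF_group\<^esub> g \<in> thompsonF_fixing S"
proof -
  have "h \<in> thompsonF" and h_fix: "\<forall>x\<in>S. h x = x"
    using h unfolding thompsonF_fixing_def by auto
  then have "inv\<^bsub>thompsonF_group\<^esub> g \<circ> h \<circ> g \<in> thompsonF"
    using F.m_closed F.inv_closed g(1) by simp
  moreover have "(inv\<^bsub>thompsonF_group\<^esub> g \<circ> h \<circ> g) x = x" if "x \<in> S" for x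
    using that g h_fix thompsonF_inv(2)[OF g(1)] by auto
  ultimately show ?thesis unfolding thompsonF_fixing_def by simp
qed

lemma thompsonF_fixing_ray_conjugates_comparable:
  assumes "S = {c..} \<or> S = {..c}" and g: "g \<in> carrier thompsonF_group"
  shows "(\<forall>h\<in>thompsonF_fixing S. g \<otimes>\<^bsub>thompsonF_group\<^esub> h \<otimes>\<^bsub>thompsonF_group\<^esub> inv\<^bsub>thompsonF_group\<^esub> g \<in> thompsonF_fixing S)
    \<or> (\<forall>h\<in>thompsonF_fixing S. inv\<^bsub>thompsonF_group\<^esub> g \<otimes>\<^bsub>thompsonF_group\<^esub> h \<otimes>\<^bsub>thompsonF_group\<^esub> g \<in> thompsonF_fixing S)"
proof -
  have "mono g" and g_inv: "\<And>x. g ((inv\<^bsub>thompsonF_group\<^esub> g) x) = x"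
    using g mono_thompsonF thompsonF_inv by auto
  then have "g ` S \<subseteq> S \<or> (inv\<^bsub>thompsonF_group\<^esub> g) ` S \<subseteq> S"
    using assms(1) mono_image_atLeast_or_inverse mono_image_atMost_or_inverse by blast
  then show ?thesis
  proof
    assume "g ` S \<subseteq> S"
    then show ?thesis using conjugate_in_thompsonF_fixing g by simp
  next
    assume "(inv\<^bsub>thompsonF_group\<^esub> g) ` S \<subseteq> S"
    then show ?thesis
      using conjugate_in_thompsonF_fixing[of "inv\<^bsub>thompsonF_group\<^esub> g"] F.inv_inv g thompsonF_inv(3)
      by simp
  qed
qed

end

lemma acts_transitively_thompsonF_fixing_ray:
  assumes action: "faithful_action thompsonF_group E \<phi>"
    and three: "k_transitive thompsonF_group E \<phi> 3"
    and ray: "S = {c..} \<or> S = {..c}" and h: "h \<in> thompsonF_fixing S" "h \<noteq> id"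
  shows "acts_transitively (thompsonF_fixing S) E \<phi>"
proof -
  interpret faithful_action thompsonF_group E \<phi> by (rule action)
  have group: "group thompsonF_group" using group_hom group_hom.axioms(1) by blast
  have "h \<in> carrier thompsonF_group" using h(1) by (simp add: thompsonF_fixing_def)
  then obtain x where "x \<in> E" "\<phi> h x \<noteq> x" using eq_one_if_fixes_all h(2) by auto
  then show ?thesis
    using acts_transitively_if_conjugates_comparable[OF subgroup_thompsonF_fixing[OF group] _ three h(1)]
      thompsonF_fixing_ray_conjugates_comparable[OF group ray] by blast
qed

lemma thompsonF_fixing_atMost_semiregular:
  assumes action: "faithful_action thompsonF_group E \<phi>"
    and transitive: "acts_transitively (thompsonF_fixing {c..}) E \<phi>"
    and g: "g \<in> thompsonF_fixing {..c}" and x: "x \<in> E" "\<phi> g x = x"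
  shows "g = id"
proof -
  interpret faithful_action thompsonF_group E \<phi> by (rule action)
  show ?thesis
    using eq_one_if_centralizes_transitive[OF transitive _ _ _ x] thompsonF_fixing_commute g
    by (auto simp: thompsonF_fixing_def)
qed

theorem corollary5p3:
  fixes E :: "'b set" and \<phi> :: "(real \<Rightarrow> real) \<Rightarrow> 'b \<Rightarrow> 'b" and k :: nat
  assumes "faithful_action thompsonF_group E \<phi>"
    and "k_transitive thompsonF_group E \<phi> k"
  shows "k \<le> 2"
proof (rule ccontr)
  assume "\<not> k \<le> 2"
  interpret faithful_action thompsonF_group E \<phi> by (rule assms(1))
  have group: "group thompsonF_group" using group_hom group_hom.axioms(1) by blast
  have "infinite E" using infinite_if_infinite_carrier infinite_thompsonF by simp
  then have three: "k_transitive thompsonF_group E \<phi> 3"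
    using k_transitive_le[OF assms(2) _ \<open>infinite E\<close>, of 3] \<open>\<not> k \<le> 2\<close> by simp
  have dyadic: "dyadic (1/2)" "dyadic (1/4)" "dyadic (3/4)" "dyadic (1/16)" "dyadic (1/32)"
    using dyadic_int_divide_power[of 1 1] dyadic_int_divide_power[of 1 2] dyadic_int_divide_power[of 3 2]
      dyadic_int_divide_power[of 1 4] dyadic_int_divide_power[of 1 5] by simp_all
  have left: "acts_transitively (thompsonF_fixing {1/2..}) E \<phi>"
    using acts_transitively_thompsonF_fixing_ray[OF assms(1) three, of "{1/2..}" "1/2" "bump (1/4) (1/16)"]
      bump_in_thompsonF_fixing[of "1/16" "1/4" "{1/2..}"] bump_ne_id dyadic by auto
  have right: "acts_transitively (thompsonF_fixing {..3/4}) E \<phi>"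
    using acts_transitively_thompsonF_fixing_ray[OF assms(1) three, of "{..3/4}" "3/4" "bump (3/4) (1/32)"]
      bump_in_thompsonF_fixing[of "1/32" "3/4" "{..3/4}"] bump_ne_id dyadic by auto
  have "thompsonF_fixing {..1/2} \<subseteq> thompsonF_fixing {..3/4}"
    using subgroup_subset_if_semiregular[OF subgroup_thompsonF_fixing[OF group] _ _ right]
      thompsonF_fixing_atMost_semiregular[OF assms(1) left] thompsonF_fixing_antimono[of "{..1/2}" "{..3/4}"]
      \<open>infinite E\<close> by fastforce
  moreover have "bump (1/2) (1/16) \<in> thompsonF_fixing {..1/2}"
    using bump_in_thompsonF_fixing[of "1/16" "1/2" "{..1/2}"] dyadic by simp
  moreover have "bump (1/2) (1/16) (5/8) \<noteq> 5/8"
    using bump_middle[of "1/16" "1/2"] by simp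
  ultimately show False by (auto simp: thompsonF_fixing_def)
qed

end
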